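(* For every positive integer $n$, every nonzero real root of $D(F_n,x)=(2x+x^2)^n+x(1+x)^{2n}$ lies in the open interval $(-2,0)$. Moreover, for every even positive integer $n$, $D(F_n,x)$ has at least two real roots in $(-2,0)$, neither of which equals $-1$ (more precisely, at least one in $(-2,-1)$ and at least one in $(-1,0)$). *)

theory Defs
  imports Complex_Main
begin

definition DF :: "nat \<Rightarrow> real \<Rightarrow> real" where
  "DF n x = (2*x + x^2)^n + x * (1 + x)^(2*n)"

end

theory Submission
  imports Defs
begin

(* Writing t = x (x + 2), we have (1 + x)^2 = t + 1, so DF n x = t^n + x (t + 1)^n.
   Part 1 (location of the roots): for x > 0 both summands are positive; for x <= -2
   we have t >= 0 and -x >= 2, so x (t + 1)^n <= -2 (t + 1)^n < -t^n.
   Part 2 (existence for even n = 2m): DF n (-2) = -2, DF n (-1) = 1 and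
   DF n (-1/8) = (8 * 225^m - 2401^m) / (8 * 4096^m) < 0.  A continuous function that
   changes sign on [a, b] has a root strictly inside, giving roots in (-2, -1) and
   in (-1, -1/8), the latter contained in (-1, 0). *)

lemma root_strictly_between:
  fixes f :: "real \<Rightarrow> real"
  assumes "a \<le> b" "f a * f b < 0" "\<And>x. isCont f x"
  shows "\<exists>x. a < x \<and> x < b \<and> f x = 0"
proof -
  have "f a < 0 \<and> 0 < f b \<or> f a > 0 \<and> 0 > f b"
    using assms(2) by (auto simp: mult_less_0_iff)
  then obtain x where x: "a \<le> x" "x \<le> b" "f x = 0"
    using IVT[of f a 0 b] IVT2[of f b 0 a] assms(1,3) by (auto simp: less_imp_le)
  moreover have "f a \<noteq> 0" "f b \<noteq> 0" using assms(2) by auto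
  ultimately show ?thesis by (intro exI[of _ x]) (auto simp: order.order_iff_strict)
qed

lemma DF_continuous: "isCont (DF n) x"
  unfolding DF_def[abs_def] by (intro continuous_intros)

lemma DF_in_terms_of_t: "DF n x = (x * (x + 2))^n + x * (x * (x + 2) + 1)^n"
proof -
  have "(1 + x)^(2*n) = ((1 + x)^2)^n" by (simp add: power_mult)
  also have "(1 + x)^2 = x * (x + 2) + 1" by (simp add: power2_eq_square algebra_simps)
  finally show ?thesis unfolding DF_def by (simp add: power2_eq_square algebra_simps)
qed

lemma DF_pos_right: "x > 0 \<Longrightarrow> DF n x > 0"
  unfolding DF_in_terms_of_t by (intro add_pos_pos mult_pos_pos zero_less_power) auto

text \<open>No roots at or below -2: there t \<ge> 0 and the second summand dominates.\<close>
lemma DF_neg_left: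
  assumes "n \<ge> 1" "x \<le> -2"
  shows "DF n x < 0"
proof -
  define t where "t = x * (x + 2)"
  have t: "t \<ge> 0" unfolding t_def using assms(2) by (simp add: mult_nonpos_nonpos)
  have "t^n < (t + 1)^n" using t assms(1) by (intro power_strict_mono) auto
  also have "\<dots> \<le> 2 * (t + 1)^n" using t by simp
  also have "\<dots> \<le> (-x) * (t + 1)^n" using assms(2) t by (intro mult_right_mono) auto
  finally show ?thesis unfolding DF_in_terms_of_t t_def[symmetric] by simp
qed

lemma nonzero_roots_in_interval:
  assumes "n \<ge> 1" "x \<noteq> 0" "DF n x = 0"
  shows "-2 < x \<and> x < 0"
  using DF_pos_right[of x n] DF_neg_left[OF assms(1), of x] assms(2,3) by force

lemma DF_at_minus_two: "n \<ge> 1 \<Longrightarrow> DF n (-2) = -2"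
  unfolding DF_def by simp

lemma DF_at_minus_one: "even n \<Longrightarrow> n \<ge> 1 \<Longrightarrow> DF n (-1) = 1"
  unfolding DF_def by simp

text \<open>The numerical inequality behind the sign of DF at -1/8.\<close>
lemma eight_225_pow_less: "m \<ge> 1 \<Longrightarrow> 8 * (225::real)^m < 2401^m"
proof (induction m rule: dec_induct)
  case base then show ?case by simp
next
  case (step m)
  have "8 * (225::real)^Suc m = 225 * (8 * 225^m)" by simp
  also have "\<dots> < 225 * 2401^m" using step by simp
  also have "\<dots> \<le> 2401 * 2401^m" by simp
  finally show ?case by simp
qed

lemma DF_even_at_minus_eighth:
  assumes "m \<ge> 1"
  shows "DF (2 * m) (-1/8) < 0"
proof -
  have "DF (2 * m) (-1/8) = (225/4096)^m - (1/8) * (2401/4096)^m"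
    unfolding DF_def power_mult by (simp add: power2_eq_square flip: power_mult_distrib)
  also have "\<dots> = (8 * 225^m - 2401^m) / (8 * 4096^m)"
    by (simp add: field_simps power_divide)
  also have "\<dots> < 0" using eight_225_pow_less[OF assms] by (intro divide_neg_pos) auto
  finally show ?thesis .
qed

lemma even_degree_roots:
  assumes "n \<ge> 1" "even n"
  shows "(\<exists>x::real. -2 < x \<and> x < -1 \<and> DF n x = 0) \<and>
         (\<exists>y::real. -1 < y \<and> y < 0 \<and> DF n y = 0)"
proof -
  obtain m where m: "n = 2 * m" "m \<ge> 1" using assms by auto
  have left: "DF n (-2) * DF n (-1) < 0"
    using DF_at_minus_two DF_at_minus_one assms by simp
  have right: "DF n (-1) * DF n (-1/8) < 0"
    using DF_at_minus_one DF_even_at_minus_eighth m assms by (simp add: mult_pos_neg)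
  show ?thesis
    using root_strictly_between[OF _ left DF_continuous]
          root_strictly_between[OF _ right DF_continuous] by force
qed

theorem mainTheorem3:
  shows "(\<forall>n::nat. n \<ge> 1 \<longrightarrow> (\<forall>x::real. x \<noteq> 0 \<and> DF n x = 0 \<longrightarrow> -2 < x \<and> x < 0))
       \<and> (\<forall>n::nat. n \<ge> 1 \<and> even n \<longrightarrow>
            (\<exists>x::real. -2 < x \<and> x < -1 \<and> DF n x = 0) \<and>
            (\<exists>y::real. -1 < y \<and> y < 0 \<and> DF n y = 0))"
  using nonzero_roots_in_interval even_degree_roots by blast

end
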